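(* Let $T$ be a diametrical tree with diametral path $D = v_0 v_1 \cdots v_d$ and endpoints $e_1=v_0$, $e_2=v_d$. If a limb of type (A) or of type (B) is located at $v_i$, then $i \geq 2$ and $d-i \geq 2$; if a limb of type (C) is located at $v_i$, then $i \geq 1$ and $d - i \geq 1$.
   Context: Let $G=(V,E)$ be a finite connected graph with distance $d(u,v)$, eccentricity $e(v)=\max_w d(v,w)$ and diameter $\mathrm{diam}(G)=\max_v e(v)$. A broadcast is a function $f: V\to\{0,\dots,\mathrm{diam}(G)\}$ with $f(v)\le e(v)$; its cost is $\sum_v f(v)$; it is dominating if every $u$ has some $v$ with $f(v)\ge 1$ and $d(u,v)\le f(v)$; a dominating broadcast is minimal if decreasing $f(v)$ for any $v$ with $f(v)>0$ destroys domination. $\Gamma_b(G)$ is the maximum cost of a minimal dominating broadcast, and $G$ is called diametrical if $\Gamma_b(G)=\mathrm{diam}(G)$. For a tree $T$ with a fixed diametral path $D=v_0\cdots v_d$, a vertex $u\notin D$ protrudes from $v_i$ if $v_i$ is the vertex of $D$ closest to $u$; the limb at $v_i$ (when nonempty) is the subtree induced by $v_i$ and the vertices protruding from $v_i$. It is of type (A) if it is a path $v_i x y$ of length 2 (exactly two protruding vertices); of type (B) if it consists of exactly two leaves adjacent to $v_i$; of type (C) if it consists of exactly one leaf adjacent to $v_i$. *)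

theory Defs
  imports Main
begin

definition simple_graph :: "'a set \<Rightarrow> ('a \<Rightarrow> 'a \<Rightarrow> bool) \<Rightarrow> bool" where
  "simple_graph V E \<longleftrightarrow> finite V \<and> V \<noteq> {} \<and>
     (\<forall>u v. E u v \<longrightarrow> u \<in> V \<and> v \<in> V) \<and>
     (\<forall>u v. E u v \<longrightarrow> E v u) \<and> (\<forall>u. \<not> E u u)"

definition walk :: "'a set \<Rightarrow> ('a \<Rightarrow> 'a \<Rightarrow> bool) \<Rightarrow> 'a list \<Rightarrow> bool" where
  "walk V E xs \<longleftrightarrow> xs \<noteq> [] \<and> set xs \<subseteq> V \<and>
     (\<forall>k. Suc k < length xs \<longrightarrow> E (xs ! k) (xs ! Suc k))"

definition connected_graph :: "'a set \<Rightarrow> ('a \<Rightarrow> 'a \<Rightarrow> bool) \<Rightarrow> bool" where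
  "connected_graph V E \<longleftrightarrow>
     (\<forall>u\<in>V. \<forall>v\<in>V. \<exists>xs. walk V E xs \<and> hd xs = u \<and> last xs = v)"

definition acyclic_graph :: "'a set \<Rightarrow> ('a \<Rightarrow> 'a \<Rightarrow> bool) \<Rightarrow> bool" where
  "acyclic_graph V E \<longleftrightarrow>
     \<not> (\<exists>xs. walk V E xs \<and> distinct xs \<and> 3 \<le> length xs \<and> E (last xs) (hd xs))"

definition is_tree :: "'a set \<Rightarrow> ('a \<Rightarrow> 'a \<Rightarrow> bool) \<Rightarrow> bool" where
  "is_tree V E \<longleftrightarrow> simple_graph V E \<and> connected_graph V E \<and> acyclic_graph V E"

definition gdist :: "'a set \<Rightarrow> ('a \<Rightarrow> 'a \<Rightarrow> bool) \<Rightarrow> 'a \<Rightarrow> 'a \<Rightarrow> nat" where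
  "gdist V E u v = (LEAST n. \<exists>xs. walk V E xs \<and> hd xs = u \<and> last xs = v \<and> length xs = Suc n)"

definition ecc :: "'a set \<Rightarrow> ('a \<Rightarrow> 'a \<Rightarrow> bool) \<Rightarrow> 'a \<Rightarrow> nat" where
  "ecc V E v = Max ((\<lambda>w. gdist V E v w) ` V)"

definition diam :: "'a set \<Rightarrow> ('a \<Rightarrow> 'a \<Rightarrow> bool) \<Rightarrow> nat" where
  "diam V E = Max ((\<lambda>v. ecc V E v) ` V)"

text \<open>Broadcasts (only values on V matter).\<close>
definition broadcast :: "'a set \<Rightarrow> ('a \<Rightarrow> 'a \<Rightarrow> bool) \<Rightarrow> ('a \<Rightarrow> nat) \<Rightarrow> bool" where
  "broadcast V E f \<longleftrightarrow> (\<forall>v\<in>V. f v \<le> ecc V E v)"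

definition bcost :: "'a set \<Rightarrow> ('a \<Rightarrow> nat) \<Rightarrow> nat" where
  "bcost V f = (\<Sum>v\<in>V. f v)"

definition dominating_broadcast :: "'a set \<Rightarrow> ('a \<Rightarrow> 'a \<Rightarrow> bool) \<Rightarrow> ('a \<Rightarrow> nat) \<Rightarrow> bool" where
  "dominating_broadcast V E f \<longleftrightarrow> broadcast V E f \<and>
     (\<forall>u\<in>V. \<exists>v\<in>V. 1 \<le> f v \<and> gdist V E u v \<le> f v)"

definition minimal_dominating_broadcast :: "'a set \<Rightarrow> ('a \<Rightarrow> 'a \<Rightarrow> bool) \<Rightarrow> ('a \<Rightarrow> nat) \<Rightarrow> bool" where
  "minimal_dominating_broadcast V E f \<longleftrightarrow> dominating_broadcast V E f \<and>
     (\<forall>v\<in>V. 0 < f v \<longrightarrow> (\<forall>k < f v. \<not> dominating_broadcast V E (f(v := k))))"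

definition upper_broadcast_number :: "'a set \<Rightarrow> ('a \<Rightarrow> 'a \<Rightarrow> bool) \<Rightarrow> nat" where
  "upper_broadcast_number V E =
     Max {bcost V f | f. minimal_dominating_broadcast V E f}"

definition diametrical :: "'a set \<Rightarrow> ('a \<Rightarrow> 'a \<Rightarrow> bool) \<Rightarrow> bool" where
  "diametrical V E \<longleftrightarrow> upper_broadcast_number V E = diam V E"

text \<open>Diametral path D = v_0 ... v_d given as a list of length d+1.\<close>
definition diametral_path :: "'a set \<Rightarrow> ('a \<Rightarrow> 'a \<Rightarrow> bool) \<Rightarrow> 'a list \<Rightarrow> bool" where
  "diametral_path V E D \<longleftrightarrow> walk V E D \<and> distinct D \<and> length D = Suc (diam V E) \<and>
     gdist V E (hd D) (last D) = diam V E"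

definition protrudes :: "'a set \<Rightarrow> ('a \<Rightarrow> 'a \<Rightarrow> bool) \<Rightarrow> 'a list \<Rightarrow> 'a \<Rightarrow> nat \<Rightarrow> bool" where
  "protrudes V E D u i \<longleftrightarrow> u \<in> V \<and> u \<notin> set D \<and> i < length D \<and>
     (\<forall>j < length D. j \<noteq> i \<longrightarrow> gdist V E u (D ! i) < gdist V E u (D ! j))"

definition protruding :: "'a set \<Rightarrow> ('a \<Rightarrow> 'a \<Rightarrow> bool) \<Rightarrow> 'a list \<Rightarrow> nat \<Rightarrow> 'a set" where
  "protruding V E D i = {u. protrudes V E D u i}"

definition is_leaf :: "'a set \<Rightarrow> ('a \<Rightarrow> 'a \<Rightarrow> bool) \<Rightarrow> 'a \<Rightarrow> bool" where
  "is_leaf V E x \<longleftrightarrow> x \<in> V \<and> card {w\<in>V. E x w} = 1"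

definition limb_type_A :: "'a set \<Rightarrow> ('a \<Rightarrow> 'a \<Rightarrow> bool) \<Rightarrow> 'a list \<Rightarrow> nat \<Rightarrow> bool" where
  "limb_type_A V E D i \<longleftrightarrow> (\<exists>x y. x \<noteq> y \<and> protruding V E D i = {x, y} \<and>
     E (D ! i) x \<and> E x y \<and> \<not> E (D ! i) y)"

definition limb_type_B :: "'a set \<Rightarrow> ('a \<Rightarrow> 'a \<Rightarrow> bool) \<Rightarrow> 'a list \<Rightarrow> nat \<Rightarrow> bool" where
  "limb_type_B V E D i \<longleftrightarrow> (\<exists>x y. x \<noteq> y \<and> protruding V E D i = {x, y} \<and>
     E (D ! i) x \<and> E (D ! i) y \<and> is_leaf V E x \<and> is_leaf V E y)"

definition limb_type_C :: "'a set \<Rightarrow> ('a \<Rightarrow> 'a \<Rightarrow> bool) \<Rightarrow> 'a list \<Rightarrow> nat \<Rightarrow> bool" where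
  "limb_type_C V E D i \<longleftrightarrow> (\<exists>x. protruding V E D i = {x} \<and>
     E (D ! i) x \<and> is_leaf V E x)"

end

(*
  Paths in a tree are geodesics. Hence a vertex off the diametral path D adjacent to v_0, or a
  path of length two off D hanging at v_1, would extend D to a geodesic longer than the diameter d.
  Two leaves hanging at v_1 lie, like v_0, at distance d from v_d; but a vertex with at least three
  vertices at distance d \<ge> 2 from it admits a minimal dominating broadcast of cost greater than d,
  contradicting diametricality. Reversing D handles the end v_d.
*)

theory Submission
  imports Defs
begin

lemma walk_iff_successively:
  "walk V E xs \<longleftrightarrow> xs \<noteq> [] \<and> set xs \<subseteq> V \<and> successively E xs"
  unfolding walk_def successively_conv_nth by blast

locale connected_simple_graph =
  fixes V :: "'a set" and E :: "'a \<Rightarrow> 'a \<Rightarrow> bool"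
  assumes simple: "simple_graph V E" and connected: "connected_graph V E"

locale tree = connected_simple_graph +
  assumes acyclic: "acyclic_graph V E"

context connected_simple_graph
begin

lemma finite_V: "finite V"
  and edge_in_V: "E u v \<Longrightarrow> u \<in> V \<and> v \<in> V"
  and edge_sym: "E u v \<Longrightarrow> E v u"
  and edge_irrefl: "\<not> E u u"
  using simple unfolding simple_graph_def by auto

lemma walk_rev: "walk V E xs \<Longrightarrow> walk V E (rev xs)"
  unfolding walk_iff_successively by (auto elim: successively_mono intro: edge_sym)

lemma walk_append:
  "walk V E xs \<Longrightarrow> walk V E ys \<Longrightarrow> E (last xs) (hd ys) \<Longrightarrow> walk V E (xs @ ys)"
  unfolding walk_iff_successively by (auto simp: successively_append_iff)

lemma walk_take: "walk V E xs \<Longrightarrow> k < length xs \<Longrightarrow> walk V E (take (Suc k) xs)"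
  unfolding walk_def by (auto dest: in_set_takeD)

lemma walk_drop: "walk V E xs \<Longrightarrow> k < length xs \<Longrightarrow> walk V E (drop k xs)"
  unfolding walk_def by (auto dest: in_set_dropD)

lemma gdist_le_length:
  assumes "walk V E xs" "hd xs = u" "last xs = v"
  shows "gdist V E u v \<le> length xs - 1"
proof -
  have "length xs = Suc (length xs - 1)" using assms(1) by (cases xs) (auto simp: walk_def)
  then show ?thesis unfolding gdist_def using assms by (intro Least_le) blast
qed

lemma shortest_walk_ex:
  assumes "u \<in> V" "v \<in> V"
  obtains xs where "walk V E xs" "hd xs = u" "last xs = v" "length xs = Suc (gdist V E u v)"
proof -
  obtain xs where "walk V E xs" "hd xs = u" "last xs = v"
    using connected assms unfolding connected_graph_def by blast
  then have "\<exists>n xs. walk V E xs \<and> hd xs = u \<and> last xs = v \<and> length xs = Suc n"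
    by (metis walk_def length_0_conv not0_implies_Suc)
  then have "\<exists>xs. walk V E xs \<and> hd xs = u \<and> last xs = v \<and> length xs = Suc (gdist V E u v)"
    unfolding gdist_def by (rule LeastI_ex)
  with that show ?thesis by blast
qed

lemma shortest_walk_distinct:
  assumes "walk V E xs" "length xs = Suc (gdist V E (hd xs) (last xs))"
  shows "distinct xs"
proof (rule ccontr)
  assume "\<not> distinct xs"
  then obtain A B C y where xs: "xs = A @ [y] @ B @ [y] @ C" using not_distinct_decomp by blast
  let ?ys = "A @ y # C"
  have "walk V E ?ys" using assms(1) unfolding walk_iff_successively xs
    by (auto simp: successively_append_iff successively_Cons)
  moreover have "hd ?ys = hd xs" "last ?ys = last xs" unfolding xs by (cases A; cases C; simp)+
  ultimately have "gdist V E (hd xs) (last xs) \<le> length ?ys - 1" using gdist_le_length by metis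
  then show False using assms(2) unfolding xs by simp
qed

lemma gdist_sym: assumes "u \<in> V" "v \<in> V" shows "gdist V E u v = gdist V E v u"
proof -
  have le: "gdist V E y x \<le> gdist V E x y" if xy: "x \<in> V" "y \<in> V" for x y
  proof -
    obtain xs where xs: "walk V E xs" "hd xs = x" "last xs = y" "length xs = Suc (gdist V E x y)"
      using shortest_walk_ex[OF xy] by blast
    have "hd (rev xs) = y" "last (rev xs) = x" using xs by (auto simp: hd_rev last_rev)
    then show ?thesis using gdist_le_length[OF walk_rev[OF xs(1)]] xs(4) by simp
  qed
  show ?thesis using le[OF assms] le[OF assms(2,1)] by simp
qed

lemma gdist_self: "u \<in> V \<Longrightarrow> gdist V E u u = 0"
  using gdist_le_length[of "[u]" u u] by (simp add: walk_def)

lemma gdist_eq_0D: assumes "u \<in> V" "v \<in> V" "gdist V E u v = 0" shows "u = v"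
  using shortest_walk_ex[OF assms(1,2)] assms(3) by (metis length_0_conv length_Suc_conv
      list.sel(1) last_ConsL)

lemma gdist_eq_1D: assumes "u \<in> V" "v \<in> V" "gdist V E u v = 1" shows "E u v"
proof -
  obtain xs where xs: "walk V E xs" "hd xs = u" "last xs = v" "length xs = Suc (Suc 0)"
    using shortest_walk_ex[OF assms(1,2)] assms(3) by auto
  then obtain a b where "xs = [a, b]" by (auto simp: length_Suc_conv)
  then show ?thesis using xs by (auto simp: walk_iff_successively)
qed

lemma gdist_triangle:
  assumes "u \<in> V" "v \<in> V" "w \<in> V"
  shows "gdist V E u w \<le> gdist V E u v + gdist V E v w"
proof -
  obtain xs where xs: "walk V E xs" "hd xs = u" "last xs = v" "length xs = Suc (gdist V E u v)"
    using shortest_walk_ex assms by blast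
  obtain ys where ys: "walk V E ys" "hd ys = v" "last ys = w" "length ys = Suc (gdist V E v w)"
    using shortest_walk_ex assms by blast
  obtain y ys' where ys': "ys = y # ys'" using ys by (cases ys) (auto simp: walk_def)
  have "walk V E (xs @ ys')" using xs ys ys' unfolding walk_iff_successively
    by (auto simp: successively_append_iff successively_Cons)
  moreover have "hd (xs @ ys') = u" "last (xs @ ys') = w" using xs ys ys' by (auto simp: walk_def)
  ultimately have "gdist V E u w \<le> length (xs @ ys') - 1" using gdist_le_length by blast
  then show ?thesis using xs ys ys' by simp
qed

lemma gdist_intermediate:
  assumes "u \<in> V" "v \<in> V" "k \<le> gdist V E u v"
  obtains z where "z \<in> V" "gdist V E u z = k"
proof -
  obtain xs where xs: "walk V E xs" "hd xs = u" "last xs = v" "length xs = Suc (gdist V E u v)"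
    using shortest_walk_ex assms by blast
  let ?z = "xs ! k"
  have k: "k < length xs" using xs(4) assms(3) by simp
  have z: "?z \<in> V" using xs(1) k by (auto simp: walk_def)
  have "hd (take (Suc k) xs) = u" using xs by (cases xs) auto
  moreover have "last (take (Suc k) xs) = ?z" using k by (simp add: take_Suc_conv_app_nth)
  ultimately have "gdist V E u ?z \<le> k" using gdist_le_length[OF walk_take[OF xs(1) k]] k by simp
  moreover have "gdist V E ?z v \<le> gdist V E u v - k"
    using gdist_le_length[OF walk_drop[OF xs(1) k]] xs k by (simp add: hd_drop_conv_nth)
  moreover have "gdist V E u v \<le> gdist V E u ?z + gdist V E ?z v"
    using gdist_triangle assms z by blast
  ultimately show ?thesis using that z assms(3) by simp
qed

lemma gdist_le_ecc: "u \<in> V \<Longrightarrow> v \<in> V \<Longrightarrow> gdist V E u v \<le> ecc V E u"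
  unfolding ecc_def using finite_V by (intro Max_ge) auto

lemma gdist_le_diam: "u \<in> V \<Longrightarrow> v \<in> V \<Longrightarrow> gdist V E u v \<le> diam V E"
  unfolding diam_def using finite_V gdist_le_ecc by (meson Max_ge finite_imageI image_eqI le_trans)

lemma diametral_path_rev:
  assumes "diametral_path V E D"
  shows "diametral_path V E (rev D)"
proof -
  have "walk V E D" using assms by (simp add: diametral_path_def)
  then have "hd D \<in> V" "last D \<in> V" by (auto simp: walk_def)
  then show ?thesis using assms walk_rev gdist_sym unfolding diametral_path_def
    by (auto simp: hd_rev last_rev)
qed

lemma bcost_le_upper_broadcast_number:
  assumes "minimal_dominating_broadcast V E f"
  shows "bcost V f \<le> upper_broadcast_number V E"
proof -
  let ?C = "{bcost V f |f. minimal_dominating_broadcast V E f}"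
  have "?C \<subseteq> {..\<Sum>v\<in>V. ecc V E v}"
    by (auto simp: minimal_dominating_broadcast_def dominating_broadcast_def broadcast_def
        bcost_def intro!: sum_mono)
  then have "finite ?C" using finite_subset by blast
  then show ?thesis unfolding upper_broadcast_number_def using assms by (intro Max_ge) auto
qed

lemma not_dominating_broadcastI:
  assumes "u \<in> V" "\<forall>v\<in>V. 1 \<le> f v \<longrightarrow> f v < gdist V E u v"
  shows "\<not> dominating_broadcast V E f"
  using assms unfolding dominating_broadcast_def by (meson not_le)

text \<open>Witnessed by the broadcast of value k at w and 1 on S: S_far and S_indep make every s in S
  its own private neighbour, and k_least makes every smaller value at w fail.\<close>

lemma upper_broadcast_number_ge_centre_and_set:
  fixes k :: nat
  assumes w: "w \<in> V" and S: "S \<subseteq> V" "w \<notin> S" and k: "1 \<le> k" "k \<le> ecc V E w"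
    and S_ecc: "\<forall>s\<in>S. 1 \<le> ecc V E s"
    and covers: "\<forall>u\<in>V. gdist V E u w \<le> k \<or> (\<exists>s\<in>S. gdist V E u s \<le> 1)"
    and S_far: "\<forall>s\<in>S. k < gdist V E s w"
    and S_indep: "\<forall>s\<in>S. \<forall>s'\<in>S. s \<noteq> s' \<longrightarrow> 1 < gdist V E s s'"
    and k_least: "\<forall>k'. 1 \<le> k' \<longrightarrow> k' < k \<longrightarrow>
                    (\<exists>u\<in>V. k' < gdist V E u w \<and> (\<forall>s\<in>S. 1 < gdist V E u s))"
  shows "k + card S \<le> upper_broadcast_number V E"
proof -
  let ?f = "\<lambda>v. if v = w then k else if v \<in> S then 1 else 0"
  have dominating: "dominating_broadcast V E ?f"
    unfolding dominating_broadcast_def broadcast_def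
    using w S k S_ecc covers by fastforce
  have minimal: "\<not> dominating_broadcast V E (?f(v := k'))"
    if v: "v \<in> V" "0 < ?f v" "k' < ?f v" for v k'
  proof (cases "v = w")
    case True
    show ?thesis
    proof (cases "k' = 0")
      case True
      have "\<forall>s\<in>S. 1 < gdist V E w s" using S_far k S w gdist_sym by fastforce
      then show ?thesis using \<open>v = w\<close> True w by (intro not_dominating_broadcastI) auto
    next
      case False
      moreover have "k' < k" using v \<open>v = w\<close> by simp
      ultimately obtain u where "u \<in> V" "k' < gdist V E u w" "\<forall>s\<in>S. 1 < gdist V E u s"
        using k_least by (meson less_one not_le)
      then show ?thesis using \<open>v = w\<close> by (intro not_dominating_broadcastI) auto
    qed
  next
    case False
    then have "v \<in> S" "k' = 0" using v by (auto split: if_splits)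
    then show ?thesis using False v S_far S_indep
      by (intro not_dominating_broadcastI[OF v(1)]) auto
  qed
  have "bcost V ?f = k + card S"
  proof -
    have "?f = (\<lambda>v. (if v = w then k else 0) + (if v \<in> S then 1 else 0))"
      using S by auto
    then show ?thesis unfolding bcost_def
      using w S finite_V by (simp add: sum.distrib sum.If_cases Int_absorb1 Int_absorb2)
  qed
  moreover have "minimal_dominating_broadcast V E ?f"
    using dominating minimal unfolding minimal_dominating_broadcast_def by blast
  ultimately show ?thesis using bcost_le_upper_broadcast_number by metis
qed

end

lemma protrudes_iff_closest:
  assumes "distinct D"
  shows "protrudes V E D u i \<longleftrightarrow> u \<in> V \<and> u \<notin> set D \<and> i < length D \<and>
           (\<forall>v\<in>set D. v \<noteq> D ! i \<longrightarrow> gdist V E u (D ! i) < gdist V E u v)"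
  unfolding protrudes_def using assms
  by (auto simp: in_set_conv_nth nth_eq_iff_index_eq) (metis nth_eq_iff_index_eq nth_mem)

lemma protruding_rev:
  assumes "distinct D" "i < length D"
  shows "protruding V E (rev D) (length D - Suc i) = protruding V E D i"
proof -
  have "rev D ! (length D - Suc i) = D ! i" using assms(2) by (simp add: rev_nth)
  then show ?thesis using assms unfolding protruding_def by (auto simp: protrudes_iff_closest)
qed

lemma limb_types_rev:
  assumes "distinct D" "i < length D"
  shows "limb_type_A V E (rev D) (length D - Suc i) \<longleftrightarrow> limb_type_A V E D i"
    and "limb_type_B V E (rev D) (length D - Suc i) \<longleftrightarrow> limb_type_B V E D i"
    and "limb_type_C V E (rev D) (length D - Suc i) \<longleftrightarrow> limb_type_C V E D i"
  unfolding limb_type_A_def limb_type_B_def limb_type_C_def protruding_rev[OF assms]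
  using assms(2) by (simp_all add: rev_nth)

context tree
begin

lemma no_cycle: "\<not> (walk V E xs \<and> distinct xs \<and> 3 \<le> length xs \<and> E (last xs) (hd xs))"
  using acyclic unfolding acyclic_graph_def by blast

text \<open>Follow the second path until it first meets the first one: the two pieces close a cycle.\<close>

lemma branching_paths_end_differently:
  assumes P: "walk V E (a # b # P')" "distinct (a # b # P')"
    and Q: "walk V E (a # c # Q')" "distinct (a # c # Q')" and "b \<noteq> c"
  shows "last (b # P') \<noteq> last (c # Q')"
proof
  assume l: "last (b # P') = last (c # Q')"
  have "\<exists>x\<in>set (c # Q'). x \<in> set (a # b # P')"
    using l by (metis last_in_set list.set_intros(2) list.distinct(1))
  then obtain Q1 t Q2 where Qs: "c # Q' = Q1 @ t # Q2" and tP: "t \<in> set (a # b # P')"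
    and Q1P: "\<forall>y\<in>set Q1. y \<notin> set (a # b # P')"
    using split_list_first_prop[of "c # Q'" "\<lambda>x. x \<in> set (a # b # P')"] by blast
  obtain P1 P2 where Ps: "a # b # P' = P1 @ t # P2" using tP split_list by metis
  have "t \<noteq> a" using Q(2) Qs by (metis distinct.simps(2) in_set_conv_decomp list.set_intros(1))
  then obtain P1' where P1: "P1 = a # P1'" using Ps by (cases P1) auto
  let ?C = "P1 @ t # rev Q1"
  have sP: "successively E (a # b # P')" and sQ: "successively E (a # c # Q')"
    using P Q by (auto simp: walk_iff_successively)
  have "successively E (P1 @ [t])" using sP unfolding Ps
    by (metis append_Cons append_assoc self_append_conv2 successively_append_iff)
  moreover have "successively E (t # rev Q1)"
  proof -
    have "successively E (Q1 @ [t])" using sQ unfolding Qs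
      by (metis append_Cons append_assoc self_append_conv2 successively_Cons successively_append_iff)
    then have "successively (\<lambda>x y. E y x) (Q1 @ [t])" by (rule successively_mono) (simp add: edge_sym)
    then show ?thesis by (metis rev.simps(2) rev_rev_ident successively_rev)
  qed
  ultimately have walk: "walk V E ?C"
    using P Q Ps Qs unfolding walk_iff_successively
    by (auto simp: successively_append_iff successively_Cons; metis Un_iff set_append subset_iff list.set_intros)
  have distinct: "distinct ?C" using P(2) Q(2) Ps Qs Q1P
    by (auto; metis distinct_append distinct.simps(2) set_append Un_iff list.set_intros)
  show False
  proof (cases Q1)
    case Nil
    then have "t = c" using Qs by simp
    then have "P1' \<noteq> []" using Ps P1 \<open>b \<noteq> c\<close> by auto
    moreover have "E t a" using \<open>t = c\<close> sQ by (auto intro: edge_sym)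
    ultimately show False using no_cycle[of ?C] walk distinct Nil P1 by (cases P1') auto
  next
    case (Cons q Q1')
    then have "q = c" using Qs by simp
    then have "E (last ?C) (hd ?C)" using sQ Cons P1 by (auto intro: edge_sym)
    then show False using no_cycle[of ?C] walk distinct Cons P1 by auto
  qed
qed

lemma paths_unique:
  "walk V E P \<Longrightarrow> distinct P \<Longrightarrow> walk V E Q \<Longrightarrow> distinct Q \<Longrightarrow>
   hd P = hd Q \<Longrightarrow> last P = last Q \<Longrightarrow> P = Q"
proof (induction P arbitrary: Q)
  case Nil
  then show ?case by (simp add: walk_def)
next
  case (Cons a P)
  obtain Q0 where Q: "Q = a # Q0" using Cons.prems by (cases Q) (auto simp: walk_def)
  show ?case
  proof (cases P)
    case Nil
    then show ?thesis using Cons.prems Q by (cases Q0) (auto dest: last_in_set split: if_splits)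
  next
    case (Cons b P')
    have "Q0 \<noteq> []" using Cons.prems Q \<open>P = b # P'\<close> last_in_set[of "b # P'"] by auto
    then obtain c Q' where Q0: "Q0 = c # Q'" by (cases Q0) auto
    have "b = c"
      using branching_paths_end_differently[of a b P' c Q'] Cons.prems Q Q0 \<open>P = b # P'\<close> by auto
    then have "P = Q0"
      using Cons.prems Q Q0 \<open>P = b # P'\<close> by (intro Cons.IH) (auto simp: walk_iff_successively)
    then show ?thesis using Q by simp
  qed
qed

lemma gdist_path:
  assumes "walk V E P" "distinct P"
  shows "gdist V E (hd P) (last P) = length P - 1"
proof -
  have "hd P \<in> V" "last P \<in> V" using assms by (auto simp: walk_def)
  then obtain xs where xs: "walk V E xs" "hd xs = hd P" "last xs = last P"
    "length xs = Suc (gdist V E (hd P) (last P))" using shortest_walk_ex by metis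
  then have "xs = P" using shortest_walk_distinct paths_unique assms by metis
  then show ?thesis using xs by simp
qed

lemma gdist_adjacent_neq:
  assumes w: "w \<in> V" and ab: "E a b"
  shows "gdist V E w a \<noteq> gdist V E w b"
proof
  assume eq: "gdist V E w a = gdist V E w b"
  have a: "a \<in> V" and b: "b \<in> V" using edge_in_V ab by auto
  obtain P where P: "walk V E P" "hd P = w" "last P = a" "length P = Suc (gdist V E w a)"
    using shortest_walk_ex[OF w a] by blast
  have "b \<notin> set P"
  proof
    assume "b \<in> set P"
    then obtain P1 P2 where Ps: "P = P1 @ b # P2" by (metis split_list)
    have "walk V E (P1 @ [b])" using P(1) unfolding Ps walk_iff_successively
      by (auto simp: successively_append_iff successively_Cons)
    moreover have "hd (P1 @ [b]) = w" using P(2) Ps by (cases P1) auto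
    ultimately have "gdist V E w b \<le> length P1" using gdist_le_length by fastforce
    moreover have "P2 \<noteq> []" using Ps P(3) ab edge_irrefl by auto
    ultimately show False using eq P(4) Ps by (cases P2) auto
  qed
  moreover have "walk V E (P @ [b])"
    using walk_append[OF P(1), of "[b]"] P(3) ab b unfolding walk_def[of _ _ "[b]"] by simp
  moreover have "distinct P" using shortest_walk_distinct P by metis
  ultimately have "gdist V E w b = length P" using gdist_path[of "P @ [b]"] P(1,2)
    by (cases P) (auto simp: walk_def)
  then show False using eq P(4) by simp
qed

lemma equidistant_gdist_gt_1:
  assumes "w \<in> V" "u \<in> V" "v \<in> V" "u \<noteq> v" "gdist V E w u = gdist V E w v"
  shows "1 < gdist V E u v"
  using gdist_eq_0D[of u v] gdist_eq_1D[of u v] gdist_adjacent_neq[of w u v] assms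
  by (metis less_one nat_neq_iff)

text \<open>P followed by the part of D from D!j on is a path, and paths in a tree are geodesics.\<close>

lemma gdist_hanging_path_to_last:
  assumes D: "walk V E D" "distinct D" "j < length D"
    and P: "walk V E P" "distinct P" "set P \<inter> set D = {}" "E (last P) (D ! j)"
  shows "gdist V E (hd P) (last D) = length P + (length D - Suc j)"
proof -
  let ?Q = "P @ drop j D"
  have "walk V E ?Q"
    using walk_append[OF P(1) walk_drop[OF D(1,3)]] P(4) D(3) by (simp add: hd_drop_conv_nth)
  moreover have "distinct ?Q" using D(2) P(2,3) by (auto dest: in_set_dropD)
  ultimately have "gdist V E (hd ?Q) (last ?Q) = length ?Q - 1" by (rule gdist_path)
  moreover have "P \<noteq> []" using P(1) by (simp add: walk_def)
  ultimately show ?thesis using D(3) by simp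
qed

lemma diametral_path_hanging_path_length:
  assumes D: "diametral_path V E D" "j < length D"
    and P: "walk V E P" "distinct P" "set P \<inter> set D = {}" "E (last P) (D ! j)"
  shows "length P \<le> j"
proof -
  have D': "walk V E D" "distinct D" "length D = Suc (diam V E)"
    using D(1) by (auto simp: diametral_path_def)
  then have "hd P \<in> V" "last D \<in> V" using P(1) by (auto simp: walk_def)
  then have "gdist V E (hd P) (last D) \<le> diam V E" by (rule gdist_le_diam)
  then show ?thesis using gdist_hanging_path_to_last[OF D'(1,2) D(2) P] D'(3) D(2) by simp
qed

text \<open>The witness is the broadcast of strength k from w and of strength 1 from every vertex at
  distance diam from w, where k is the least strength that dominates the rest; a vertex at distance
  diam - 2 from w on a geodesic to such a far vertex shows k \<ge> diam - 2.\<close>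

lemma upper_broadcast_number_ge_far_set:
  assumes w: "w \<in> V" and d2: "2 \<le> diam V E"
    and s0: "s0 \<in> V" "gdist V E w s0 = diam V E"
  shows "diam V E + card {u\<in>V. gdist V E w u = diam V E} \<le> upper_broadcast_number V E + 2"
proof -
  define d where "d = diam V E"
  define S where "S = {u\<in>V. gdist V E w u = d}"
  define covers where "covers k \<longleftrightarrow> (\<forall>u\<in>V. gdist V E u w \<le> k \<or> (\<exists>s\<in>S. gdist V E u s \<le> 1))"
    for k
  define k where "k = (LEAST k. 1 \<le> k \<and> covers k)"
  have S: "S \<subseteq> V" "w \<notin> S" and S_w: "\<forall>s\<in>S. gdist V E s w = d"
    using gdist_self[OF w] gdist_sym[OF w] d2 by (auto simp: S_def d_def)
  have "covers (d - 1)"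
    unfolding covers_def
  proof
    fix u assume u: "u \<in> V"
    show "gdist V E u w \<le> d - 1 \<or> (\<exists>s\<in>S. gdist V E u s \<le> 1)"
    proof (cases "gdist V E w u = d")
      case True
      then show ?thesis using u gdist_self[OF u] by (auto simp: S_def)
    next
      case False
      then show ?thesis using gdist_le_diam[OF w u] gdist_sym[OF u w] unfolding d_def by linarith
    qed
  qed
  then have "1 \<le> d - 1 \<and> covers (d - 1)" using d2 by (simp add: d_def)
  then have k: "1 \<le> k" "covers k" "k \<le> d - 1"
    unfolding k_def by (auto intro: LeastI2 Least_le)
  have "d - 2 \<le> k"
  proof -
    obtain z where z: "z \<in> V" "gdist V E w z = d - 2"
      using gdist_intermediate[OF w s0(1), of "d - 2"] s0(2) by (auto simp: d_def)
    have "\<not> gdist V E z s \<le> 1" if "s \<in> S" for s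
      using gdist_triangle[OF w z(1), of s] that z(2) S d2 by (auto simp: S_def d_def)
    then show ?thesis using k(2) z gdist_sym[OF z(1) w] unfolding covers_def by fastforce
  qed
  have "k + card S \<le> upper_broadcast_number V E"
  proof (rule upper_broadcast_number_ge_centre_and_set[OF w S k(1)])
    show "k \<le> ecc V E w" using k(3) gdist_le_ecc[OF w s0(1)] s0(2) by (simp add: d_def)
    show "\<forall>s\<in>S. 1 \<le> ecc V E s" using gdist_le_ecc[OF _ w] S_w S d2 by (force simp: d_def)
    show "\<forall>u\<in>V. gdist V E u w \<le> k \<or> (\<exists>s\<in>S. gdist V E u s \<le> 1)"
      using k(2) by (simp add: covers_def)
    show "\<forall>s\<in>S. k < gdist V E s w" using k(3) S_w d2 unfolding d_def by auto
    show "\<forall>s\<in>S. \<forall>s'\<in>S. s \<noteq> s' \<longrightarrow> 1 < gdist V E s s'"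
      using equidistant_gdist_gt_1[OF w] by (auto simp: S_def)
    show "\<forall>k'. 1 \<le> k' \<longrightarrow> k' < k \<longrightarrow>
            (\<exists>u\<in>V. k' < gdist V E u w \<and> (\<forall>s\<in>S. 1 < gdist V E u s))"
      using not_less_Least[of _ "\<lambda>k. 1 \<le> k \<and> covers k"] unfolding k_def covers_def
      by (auto simp: not_le)
  qed
  then show ?thesis using \<open>d - 2 \<le> k\<close> d2 by (simp add: S_def d_def)
qed

lemma protruding_neighbour_index_pos:
  assumes D: "diametral_path V E D" and x: "x \<in> protruding V E D i" "E (D ! i) x"
  shows "1 \<le> i"
proof -
  have "x \<in> V" "x \<notin> set D" "i < length D" using x(1) by (auto simp: protruding_def protrudes_def)
  then show ?thesis using diametral_path_hanging_path_length[OF D, of i "[x]"] x(2) edge_sym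
    by (simp add: walk_def)
qed

lemma limb_index_pos:
  assumes "diametral_path V E D"
    and "limb_type_A V E D i \<or> limb_type_B V E D i \<or> limb_type_C V E D i"
  shows "1 \<le> i"
  using assms(2) protruding_neighbour_index_pos[OF assms(1)]
  unfolding limb_type_A_def limb_type_B_def limb_type_C_def by blast

lemma no_limb_type_A_at_second:
  assumes D: "diametral_path V E D"
  shows "\<not> limb_type_A V E D 1"
proof
  assume "limb_type_A V E D 1"
  then obtain x y where xy: "x \<noteq> y" "protruding V E D 1 = {x, y}" "E (D ! 1) x" "E x y"
    unfolding limb_type_A_def by blast
  then have "x \<in> V" "y \<in> V" "x \<notin> set D" "y \<notin> set D" "1 < length D"
    by (auto simp: protruding_def protrudes_def set_eq_iff)
  then show False using diametral_path_hanging_path_length[OF D, of 1 "[y, x]"] xy edge_sym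
    by (simp add: walk_iff_successively)
qed

lemma no_limb_type_B_at_second:
  assumes "diametrical V E" and D: "diametral_path V E D" and d2: "2 \<le> diam V E"
  shows "\<not> limb_type_B V E D 1"
proof
  assume "limb_type_B V E D 1"
  then obtain x y where xy: "x \<noteq> y" "protruding V E D 1 = {x, y}" "E (D ! 1) x" "E (D ! 1) y"
    unfolding limb_type_B_def by blast
  then have xyV: "x \<in> V" "y \<in> V" "x \<notin> set D" "y \<notin> set D"
    by (auto simp: protruding_def protrudes_def set_eq_iff)
  have D': "walk V E D" "distinct D" "length D = Suc (diam V E)"
    "gdist V E (hd D) (last D) = diam V E" using D by (auto simp: diametral_path_def)
  then have ends: "hd D \<in> set D" "hd D \<in> V" "last D \<in> V" by (auto simp: walk_def)
  have far: "gdist V E v (last D) = diam V E" if "v \<in> V" "v \<notin> set D" "E (D ! 1) v" for v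
    using gdist_hanging_path_to_last[OF D'(1,2), of 1 "[v]"] that edge_sym D'(3) d2
    by (simp add: walk_def)
  let ?S = "{u\<in>V. gdist V E (last D) u = diam V E}"
  have far_set: "{hd D, x, y} \<subseteq> ?S"
    using far xy xyV D'(1,4) ends gdist_sym by (auto simp: walk_def)
  moreover have "card {hd D, x, y} = 3" using xy(1) xyV ends by (auto simp: card_insert_if)
  ultimately have "3 \<le> card ?S" using card_mono[OF _ far_set] finite_V by simp
  moreover have "hd D \<in> ?S" using far_set by blast
  ultimately have "diam V E < upper_broadcast_number V E"
    using upper_broadcast_number_ge_far_set[OF ends(3) d2] by fastforce
  then show False using assms(1) by (simp add: diametrical_def)
qed

end

theorem mainTheorem10:
  fixes V :: "'a set" and E :: "'a \<Rightarrow> 'a \<Rightarrow> bool" and D :: "'a list" and i d :: nat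
  assumes "is_tree V E"
    and "diametrical V E"
    and "diametral_path V E D"
    and "d = length D - 1"
    and "i \<le> d"
  shows "((limb_type_A V E D i \<or> limb_type_B V E D i) \<longrightarrow> 2 \<le> i \<and> 2 \<le> d - i)
       \<and> (limb_type_C V E D i \<longrightarrow> 1 \<le> i \<and> 1 \<le> d - i)"
proof -
  interpret tree V E
    using assms(1) by unfold_locales (auto simp: is_tree_def)
  have D: "distinct D" "length D = Suc d" "diam V E = d" "i < length D"
    using assms(3-5) by (auto simp: diametral_path_def)
  have rev_D: "diametral_path V E (rev D)" using diametral_path_rev[OF assms(3)] .
  note limb_rev = limb_types_rev[OF D(1,4), unfolded D(2) diff_Suc_Suc]
  have ends: "1 \<le> i \<and> 1 \<le> d - i"
    if "limb_type_A V E D i \<or> limb_type_B V E D i \<or> limb_type_C V E D i"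
    using that limb_index_pos[OF assms(3)] limb_index_pos[OF rev_D, of "d - i"] limb_rev by blast
  have "2 \<le> i \<and> 2 \<le> d - i" if AB: "limb_type_A V E D i \<or> limb_type_B V E D i"
  proof -
    have "2 \<le> diam V E" using ends AB D(3) by fastforce
    then have "\<not> limb_type_A V E D' 1 \<and> \<not> limb_type_B V E D' 1" if "diametral_path V E D'" for D'
      using no_limb_type_A_at_second no_limb_type_B_at_second assms(2) that by blast
    then show ?thesis using ends AB limb_rev assms(3) rev_D
      by (metis One_nat_def Suc_1 Suc_leI le_neq_implies_less)
  qed
  then show ?thesis using ends by blast
qed

end
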